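(* Let $w\in S_\infty$ and $i\ge1$ with $l(ws_i)=l(w)-1$, and let $D\in\mathcal P(w)$. If $\mathrm{mitosis}_i(D)\neq\emptyset$, then either $\mathrm{mitosis}_i(D)\subseteq\mathcal P(ws_i)$ or $\mathrm{mitosis}_i(D)\subseteq\mathcal P(w)$.
   Context: Permutations: $S_\infty=\bigcup_n S_n$ is generated by the simple transpositions $s_a=(a\ a{+}1)$, $a\ge 1$; $l(w)$ is the Coxeter length of $w$. A pipe dream is a finite subset $D\subset\mathbb{Z}_{>0}\times\mathbb{Z}_{>0}$; its elements $(r,c)$ are called crosses (in row $r$, column $c$). The reading word of $D$ is obtained by listing the crosses row by row from top to bottom, within each row from right to left (decreasing $c$), and recording for each cross $(r,c)$ its antidiagonal index $r+c-1$; this gives a word $(a_1,\dots,a_k)$. For $u\in S_\infty$ put $u\star s_a=us_a$ if $l(us_a)=l(u)+1$ and $u\star s_a=u$ otherwise. The Demazure product of $D$ is $\delta(D)=(\cdots((e\star s_{a_1})\star s_{a_2})\cdots)\star s_{a_k}$. For $w\in S_\infty$, $\mathcal P(w)=\{D:\delta(D)=w\}$. Mitosis: for a pipe dream $D$ and row index $i$, let $\mathrm{start}_i(D)=\min\{c\ge 1:(i,c)\notin D\}$ and $\mathcal J_i(D)=\{c<\mathrm{start}_i(D): (i+1,c)\notin D\}$. For $p\in\mathcal J_i(D)$ let $D_p=\big(D\setminus(\{(i,p)\}\cup\{(i,c):c\in\mathcal J_i(D),c<p\})\big)\cup\{(i+1,c):c\in\mathcal J_i(D),c<p\}$ (delete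 $(i,p)$ and move each cross $(i,c)$, $c\in\mathcal J_i(D)$, $c<p$, down to $(i+1,c)$). Then $\mathrm{mitosis}_i(D)=\{D_p:p\in\mathcal J_i(D)\}$ (empty if $\mathcal J_i(D)=\emptyset$). *)

theory Defs
  imports Main
begin

text \<open>Permutations of the positive integers are modelled as functions nat \<Rightarrow> nat
  (the point 0 is never moved by simple transpositions s a with a \<ge> 1).\<close>

definition s :: "nat \<Rightarrow> nat \<Rightarrow> nat" where
  "s a = (\<lambda>x. if x = a then Suc a else if x = Suc a then a else x)"

definition wordprod :: "nat list \<Rightarrow> (nat \<Rightarrow> nat)" where
  "wordprod as = foldl (\<lambda>u a. u \<circ> s a) id as"

definition Sinf :: "(nat \<Rightarrow> nat) set" where
  "Sinf = {wordprod as | as. \<forall>a\<in>set as. 1 \<le> a}"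

definition len :: "(nat \<Rightarrow> nat) \<Rightarrow> nat" where
  "len w = (LEAST k. \<exists>as. length as = k \<and> (\<forall>a\<in>set as. 1 \<le> a) \<and> wordprod as = w)"

definition dstar :: "(nat \<Rightarrow> nat) \<Rightarrow> nat \<Rightarrow> (nat \<Rightarrow> nat)" where
  "dstar u a = (if len (u \<circ> s a) = len u + 1 then u \<circ> s a else u)"

definition pipe_dream :: "(nat \<times> nat) set \<Rightarrow> bool" where
  "pipe_dream D \<longleftrightarrow> finite D \<and> (\<forall>(r,c)\<in>D. 0 < r \<and> 0 < c)"

definition reading_word :: "(nat \<times> nat) set \<Rightarrow> nat list" where
  "reading_word D = concat (map (\<lambda>r. map (\<lambda>c. r + c - 1)
       (rev (sorted_list_of_set {c. (r, c) \<in> D})))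
     [1..<Suc (Max (insert 0 (fst ` D)))])"

definition demazure :: "(nat \<times> nat) set \<Rightarrow> (nat \<Rightarrow> nat)" where
  "demazure D = foldl dstar id (reading_word D)"

definition PD :: "(nat \<Rightarrow> nat) \<Rightarrow> (nat \<times> nat) set set" where
  "PD w = {D. pipe_dream D \<and> demazure D = w}"

definition start :: "nat \<Rightarrow> (nat \<times> nat) set \<Rightarrow> nat" where
  "start i D = (LEAST c. 1 \<le> c \<and> (i, c) \<notin> D)"

definition Jset :: "nat \<Rightarrow> (nat \<times> nat) set \<Rightarrow> nat set" where
  "Jset i D = {c. 1 \<le> c \<and> c < start i D \<and> (Suc i, c) \<notin> D}"

definition Dp :: "nat \<Rightarrow> (nat \<times> nat) set \<Rightarrow> nat \<Rightarrow> (nat \<times> nat) set" where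
  "Dp i D p = (D - ({(i, p)} \<union> {(i, c) | c. c \<in> Jset i D \<and> c < p}))
               \<union> {(Suc i, c) | c. c \<in> Jset i D \<and> c < p}"

definition mitosis :: "nat \<Rightarrow> (nat \<times> nat) set \<Rightarrow> (nat \<times> nat) set set" where
  "mitosis i D = Dp i D ` Jset i D"

end

theory Submission
  imports Defs
begin

text \<open>On \<open>S\<^sub>\<infinity>\<close> the length is the number of inversions, so \<open>u \<star> s\<^sub>a\<close> is \<open>u s\<^sub>a\<close> exactly when
  \<open>a\<close> is an ascent of \<open>u\<close>. The Demazure product of a word therefore only depends on the word
  modulo commutation of letters at distance at least 2 and the braid relation. Mitosis changes
  only rows \<open>i\<close> and \<open>i + 1\<close>, whose crosses contribute descending runs of consecutive letters to
  the reading word; such moves rewrite the word of these two rows of \<open>D\<close> into that of \<open>D\<^sub>p\<close>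
  followed by the letter \<open>i\<close>, which commutes past all later rows. Hence
  \<open>\<delta>(D) = \<delta>(D\<^sub>p) \<star> s\<^sub>i\<close>, and the same moves show that \<open>\<delta>(D\<^sub>p)\<close> does not depend on \<open>p\<close>, so it
  is \<open>w\<close> or \<open>w s\<^sub>i\<close> for all \<open>p\<close> at once.\<close>

section \<open>Coxeter length as the number of inversions\<close>

text \<open>The step of the Demazure product without reference to lengths;
  \<open>dstar_eq_hecke\<close> identifies the two on \<open>Sinf\<close>.\<close>
definition hecke :: "(nat \<Rightarrow> nat) \<Rightarrow> nat \<Rightarrow> nat \<Rightarrow> nat" where
  "hecke u a = (if u a < u (Suc a) then u \<circ> s a else u)"

lemma s_s [simp]: "s a (s a x) = x"
  by (simp add: s_def)

lemma s_comp_s: "s a \<circ> s a = id"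
  by (simp add: fun_eq_iff)

lemma bij_s: "bij (s a)"
  using o_bij[OF s_comp_s s_comp_s] .

lemma wordprod_Nil: "wordprod [] = id"
  by (simp add: wordprod_def)

lemma wordprod_snoc: "wordprod (as @ [a]) = wordprod as \<circ> s a"
  by (simp add: wordprod_def)

definition fin_perm :: "(nat \<Rightarrow> nat) \<Rightarrow> bool" where
  "fin_perm u \<longleftrightarrow> bij u \<and> u 0 = 0 \<and> (\<exists>N. \<forall>x\<ge>N. u x = x)"

lemma fin_perm_comp_s:
  assumes "fin_perm u" "1 \<le> a"
  shows "fin_perm (u \<circ> s a)"
proof -
  obtain N where N: "\<forall>x\<ge>N. u x = x" and "bij u" "u 0 = 0"
    using assms(1) by (auto simp: fin_perm_def)
  have "bij (u \<circ> s a)" using bij_s \<open>bij u\<close> by (rule bij_comp)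
  moreover have "(u \<circ> s a) 0 = 0" using assms(2) \<open>u 0 = 0\<close> by (simp add: s_def)
  moreover have "(u \<circ> s a) x = x" if "N + Suc (Suc a) \<le> x" for x
    using that N by (simp add: s_def)
  ultimately show ?thesis unfolding fin_perm_def by blast
qed

lemma Sinf_comp_s: "u \<in> Sinf \<Longrightarrow> 1 \<le> a \<Longrightarrow> u \<circ> s a \<in> Sinf"
  unfolding Sinf_def by (force simp flip: wordprod_snoc)

lemma fin_perm_Sinf: "u \<in> Sinf \<Longrightarrow> fin_perm u"
proof -
  have "fin_perm (wordprod as)" if "\<forall>a\<in>set as. 1 \<le> a" for as
    using that
  proof (induction as rule: rev_induct)
    case Nil
    then show ?case unfolding wordprod_Nil fin_perm_def by simp
  next
    case (snoc a as)
    then show ?case unfolding wordprod_snoc by (intro fin_perm_comp_s) auto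
  qed
  then show "u \<in> Sinf \<Longrightarrow> fin_perm u" by (auto simp: Sinf_def)
qed

definition inversions :: "(nat \<Rightarrow> nat) \<Rightarrow> (nat \<times> nat) set" where
  "inversions u = {(x, y). x < y \<and> u y < u x}"

lemma inversions_id [simp]: "inversions id = {}"
  by (auto simp: inversions_def)

lemma finite_inversions:
  assumes "fin_perm u"
  shows "finite (inversions u)"
proof -
  obtain N where N: "\<forall>x\<ge>N. u x = x" and "inj u"
    using assms by (auto simp: fin_perm_def bij_def)
  have bound: "y < N" if "x < y" "u y < u x" for x y
  proof (rule ccontr)
    assume "\<not> y < N"
    then have "u y = y" "N \<le> u x" using N that by auto
    then have "u (u x) = u x" using N by simp
    then have "u x = x" using \<open>inj u\<close> by (simp add: inj_eq)
    then show False using that \<open>u y = y\<close> by simp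
  qed
  have "inversions u \<subseteq> {..<N} \<times> {..<N}"
  proof
    fix p assume "p \<in> inversions u"
    then obtain x y where "p = (x, y)" "x < y" "u y < u x" by (auto simp: inversions_def)
    then show "p \<in> {..<N} \<times> {..<N}" using bound[of x y] by simp
  qed
  then show ?thesis by (rule finite_subset) simp
qed

lemma s_less_s: "x < y \<Longrightarrow> (x, y) \<noteq> (a, Suc a) \<Longrightarrow> s a x < s a y"
  by (auto simp: s_def)

lemma s_pair_eq_iff: "(s a x, s a y) = (a, Suc a) \<longleftrightarrow> (x, y) = (Suc a, a)"
  by (auto simp: s_def)

lemma inversions_comp_s:
  "inversions (u \<circ> s a) - {(a, Suc a)} = map_prod (s a) (s a) ` (inversions u - {(a, Suc a)})"
proof -
  let ?g = "map_prod (s a) (s a)"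
  have mem: "?g p \<in> inversions v - {(a, Suc a)}"
    if "p \<in> inversions (v \<circ> s a) - {(a, Suc a)}" for p v
  proof (cases p)
    case (Pair x y)
    then have xy: "x < y" "(x, y) \<noteq> (a, Suc a)" and v: "v (s a y) < v (s a x)"
      using that by (auto simp: inversions_def)
    from xy have "s a x < s a y" by (rule s_less_s)
    then have "(s a x, s a y) \<in> inversions v" using v by (simp add: inversions_def)
    moreover have "(s a x, s a y) \<noteq> (a, Suc a)" using \<open>x < y\<close> s_pair_eq_iff[of a x y] by simp
    ultimately show ?thesis using Pair by simp
  qed
  have gg: "?g (?g p) = p" for p by (cases p) simp
  have "u \<circ> s a \<circ> s a = u" by (simp add: comp_assoc s_comp_s)
  then have mem_image: "?g p \<in> inversions (u \<circ> s a) - {(a, Suc a)}"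
    if "p \<in> inversions u - {(a, Suc a)}" for p
    using mem[of p "u \<circ> s a"] that by simp
  show ?thesis
  proof (intro equalityI subsetI)
    fix p assume "p \<in> inversions (u \<circ> s a) - {(a, Suc a)}"
    then have "?g p \<in> inversions u - {(a, Suc a)}" by (rule mem)
    then have "?g (?g p) \<in> ?g ` (inversions u - {(a, Suc a)})" by (rule imageI)
    then show "p \<in> ?g ` (inversions u - {(a, Suc a)})" by (simp only: gg)
  next
    fix p assume "p \<in> ?g ` (inversions u - {(a, Suc a)})"
    then obtain q where "q \<in> inversions u - {(a, Suc a)}" and "p = ?g q" by (rule imageE)
    then show "p \<in> inversions (u \<circ> s a) - {(a, Suc a)}" using mem_image by simp
  qed
qed

lemma card_inversions_comp_s:
  assumes "fin_perm u"
  shows "card (inversions (u \<circ> s a)) =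
    (if u a < u (Suc a) then card (inversions u) + 1 else card (inversions u) - 1)"
proof -
  let ?g = "map_prod (s a) (s a)" and ?e = "(a, Suc a)"
  have "inj u" using assms by (simp add: fin_perm_def bij_is_inj)
  then have ne: "u a \<noteq> u (Suc a)" by (metis inj_eq n_not_Suc_n)
  have fin: "finite (inversions u)" using assms by (rule finite_inversions)
  have "inj ?g" using bij_s by (simp add: bij_is_inj prod.inj_map)
  then have "card (?g ` (inversions u - {?e})) = card (inversions u - {?e})"
    by (meson card_image inj_on_subset subset_UNIV)
  then have eq: "card (inversions (u \<circ> s a) - {?e}) = card (inversions u - {?e})"
    by (simp only: inversions_comp_s)
  have "inversions (u \<circ> s a) \<subseteq> insert ?e (?g ` (inversions u - {?e}))"
    using inversions_comp_s[of u a] by blast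
  then have fin': "finite (inversions (u \<circ> s a))"
    by (rule finite_subset) (simp add: fin)
  have e_iff: "?e \<in> inversions (u \<circ> s a) \<longleftrightarrow> u a < u (Suc a)"
    "?e \<in> inversions u \<longleftrightarrow> u (Suc a) < u a"
    by (simp_all add: inversions_def s_def)
  show ?thesis
  proof (cases "u a < u (Suc a)")
    case True
    have "card (inversions (u \<circ> s a)) = Suc (card (inversions (u \<circ> s a) - {?e}))"
      by (rule card.remove[OF fin']) (simp add: e_iff True)
    moreover have "inversions u - {?e} = inversions u" using True e_iff(2) by auto
    ultimately show ?thesis using True eq by simp
  next
    case False
    have "card (inversions u) = Suc (card (inversions u - {?e}))"
      by (rule card.remove[OF fin]) (use e_iff False ne in simp)
    moreover have "inversions (u \<circ> s a) - {?e} = inversions (u \<circ> s a)"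
      using False e_iff(1) by auto
    ultimately show ?thesis using False eq by simp
  qed
qed

lemma card_inversions_wordprod_le:
  "\<forall>a\<in>set as. 1 \<le> a \<Longrightarrow> card (inversions (wordprod as)) \<le> length as"
proof (induction as rule: rev_induct)
  case Nil
  show ?case unfolding wordprod_Nil inversions_id by simp
next
  case (snoc a as)
  then have "wordprod as \<in> Sinf" by (auto simp: Sinf_def)
  then have "fin_perm (wordprod as)" by (rule fin_perm_Sinf)
  then have "card (inversions (wordprod as \<circ> s a)) \<le> Suc (card (inversions (wordprod as)))"
    using card_inversions_comp_s[of "wordprod as" a] by (simp split: if_splits)
  moreover have "card (inversions (wordprod as)) \<le> length as" using snoc by simp
  ultimately show ?case unfolding wordprod_snoc length_append_singleton by linarith
qed

lemma fin_perm_descent: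
  assumes "fin_perm u" "u \<noteq> id"
  shows "\<exists>a\<ge>1. u (Suc a) < u a"
proof (rule ccontr)
  assume no_descent: "\<not> ?thesis"
  have "inj u" "surj u" "u 0 = 0" using assms(1) by (auto simp: fin_perm_def bij_def)
  have "u a < u (Suc a)" for a
  proof -
    have "u a \<noteq> u (Suc a)" using \<open>inj u\<close> by (simp add: inj_eq)
    moreover have "\<not> u (Suc a) < u a"
      using no_descent \<open>u 0 = 0\<close> by (cases a) auto
    ultimately show ?thesis by simp
  qed
  then have mono: "strict_mono u" by (simp add: strict_mono_Suc_iff)
  have "u x = x" for x
  proof (induction x rule: less_induct)
    case (less x)
    obtain z where z: "u z = x" using \<open>surj u\<close> by (metis surjD)
    then have "x \<le> z" using less.IH[of z] by (cases "z < x") auto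
    then have "u x \<le> x" using mono z by (metis strict_mono_less_eq)
    then show ?case using strict_mono_imp_increasing[OF mono, of x] by simp
  qed
  then show False using assms(2) by auto
qed

lemma Sinf_reduced_word:
  "u \<in> Sinf \<Longrightarrow> \<exists>as. length as = card (inversions u) \<and> (\<forall>a\<in>set as. 1 \<le> a) \<and> wordprod as = u"
proof (induction "card (inversions u)" arbitrary: u)
  case 0
  have "u = id"
  proof (rule ccontr)
    assume "u \<noteq> id"
    then obtain a where "u (Suc a) < u a"
      using fin_perm_descent fin_perm_Sinf[OF 0(2)] by blast
    then have "(a, Suc a) \<in> inversions u" by (simp add: inversions_def)
    then show False using 0 finite_inversions[OF fin_perm_Sinf] by (metis card_0_eq empty_iff)
  qed
  then show ?case using 0 by (intro exI[of _ "[]"]) (simp add: wordprod_Nil)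
next
  case (Suc n)
  have u: "fin_perm u" using Suc(3) by (rule fin_perm_Sinf)
  have "u \<noteq> id" using Suc(2) by (auto simp: inversions_id)
  then obtain a where a: "1 \<le> a" "u (Suc a) < u a" using fin_perm_descent[OF u] by blast
  have "card (inversions (u \<circ> s a)) = n" using card_inversions_comp_s[OF u, of a] a Suc(2) by simp
  then obtain as where as: "length as = n" "\<forall>a\<in>set as. 1 \<le> a" "wordprod as = u \<circ> s a"
    using Suc Sinf_comp_s a by blast
  have "wordprod (as @ [a]) = u" using as by (simp add: wordprod_snoc comp_assoc s_comp_s)
  then show ?case using as a Suc(2) by (intro exI[of _ "as @ [a]"]) auto
qed

lemma len_eq_card_inversions:
  assumes "u \<in> Sinf"
  shows "len u = card (inversions u)"
  unfolding len_def
proof (rule Least_equality)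
  show "\<exists>as. length as = card (inversions u) \<and> (\<forall>a\<in>set as. 1 \<le> a) \<and> wordprod as = u"
    using assms by (rule Sinf_reduced_word)
  show "card (inversions u) \<le> k"
    if "\<exists>as. length as = k \<and> (\<forall>a\<in>set as. 1 \<le> a) \<and> wordprod as = u" for k
    using that card_inversions_wordprod_le by blast
qed

lemma dstar_eq_hecke: "u \<in> Sinf \<Longrightarrow> 1 \<le> a \<Longrightarrow> dstar u a = hecke u a"
  using card_inversions_comp_s[OF fin_perm_Sinf, of u a]
  by (auto simp: dstar_def hecke_def len_eq_card_inversions Sinf_comp_s)

lemma foldl_dstar_eq_foldl_hecke:
  "u \<in> Sinf \<Longrightarrow> \<forall>a\<in>set as. 1 \<le> a \<Longrightarrow> foldl dstar u as = foldl hecke u as"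
  by (induction as arbitrary: u) (auto simp: dstar_eq_hecke hecke_def Sinf_comp_s)

section \<open>Words modulo the 0-Hecke relations\<close>

lemma hecke_commute: "Suc a < b \<Longrightarrow> hecke (hecke u a) b = hecke (hecke u b) a"
  by (auto simp: hecke_def s_def fun_eq_iff)

lemma hecke_braid: "hecke (hecke (hecke u a) (Suc a)) a = hecke (hecke (hecke u (Suc a)) a) (Suc a)"
  unfolding hecke_def s_def fun_eq_iff by (auto split: if_splits)

definition hecke_equiv :: "nat list \<Rightarrow> nat list \<Rightarrow> bool" (infix "\<approx>" 50) where
  "xs \<approx> ys \<longleftrightarrow> (\<forall>u. foldl hecke u xs = foldl hecke u ys)"

lemma hecke_equiv_refl [simp]: "xs \<approx> xs"
  by (simp add: hecke_equiv_def)

lemma hecke_equiv_sym: "xs \<approx> ys \<Longrightarrow> ys \<approx> xs"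
  by (simp add: hecke_equiv_def)

lemma hecke_equiv_trans [trans]: "xs \<approx> ys \<Longrightarrow> ys \<approx> zs \<Longrightarrow> xs \<approx> zs"
  by (simp add: hecke_equiv_def)

lemma hecke_equiv_append: "xs \<approx> ys \<Longrightarrow> as @ xs @ bs \<approx> as @ ys @ bs"
  by (simp add: hecke_equiv_def)

definition far :: "nat \<Rightarrow> nat \<Rightarrow> bool" where
  "far x y \<longleftrightarrow> Suc x < y \<or> Suc y < x"

lemma hecke_equiv_swap: "far x y \<Longrightarrow> [x, y] \<approx> [y, x]"
  using hecke_commute[of x y] hecke_commute[of y x] by (auto simp: hecke_equiv_def far_def)

lemma hecke_equiv_braid: "[a, Suc a, a] \<approx> [Suc a, a, Suc a]"
  using hecke_braid by (simp add: hecke_equiv_def)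

lemma hecke_equiv_commute_letter: "\<forall>x\<in>set xs. far x c \<Longrightarrow> xs @ [c] \<approx> c # xs"
proof (induction xs)
  case (Cons x xs)
  have "(x # xs) @ [c] = [x] @ (xs @ [c]) @ []" by simp
  also have "\<dots> \<approx> [x] @ (c # xs) @ []"
    using Cons by (intro hecke_equiv_append) auto
  also have "\<dots> = [] @ [x, c] @ xs" by simp
  also have "\<dots> \<approx> [] @ [c, x] @ xs"
    using Cons by (intro hecke_equiv_append hecke_equiv_swap) auto
  finally show ?case by simp
qed simp

lemma hecke_equiv_commute: "\<forall>x\<in>set xs. \<forall>y\<in>set ys. far x y \<Longrightarrow> xs @ ys \<approx> ys @ xs"
proof (induction ys)
  case (Cons y ys)
  have "xs @ y # ys = [] @ (xs @ [y]) @ ys" by simp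
  also have "\<dots> \<approx> [] @ (y # xs) @ ys"
    using Cons by (intro hecke_equiv_append hecke_equiv_commute_letter) auto
  also have "\<dots> = [y] @ (xs @ ys) @ []" by simp
  also have "\<dots> \<approx> [y] @ (ys @ xs) @ []"
    using Cons by (intro hecke_equiv_append) auto
  finally show ?case by simp
qed simp

lemma hecke_equiv_commute_within:
  "\<forall>x\<in>set xs. \<forall>y\<in>set ys. far x y \<Longrightarrow> as @ xs @ ys @ bs \<approx> as @ ys @ xs @ bs"
  using hecke_equiv_append[OF hecke_equiv_commute] by simp

definition down :: "nat \<Rightarrow> nat \<Rightarrow> nat list" where
  "down a b = rev [a..<b]"

lemma set_down [simp]: "set (down a b) = {a..<b}"
  by (simp add: down_def)

lemma down_self [simp]: "down a a = []"
  by (simp add: down_def)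

lemma down_split: "a \<le> m \<Longrightarrow> m \<le> b \<Longrightarrow> down a b = down m b @ down a m"
  unfolding down_def using upt_add_eq_append[of a m "b - m"] by simp

lemma down_Suc: "a \<le> b \<Longrightarrow> down a (Suc b) = b # down a b"
  by (simp add: down_def)

text \<open>Commute \<open>c\<close> next to the letters \<open>c, c - 1\<close> of the run, apply the braid relation,
  and commute the new letter \<open>c - 1\<close> to the front.\<close>
lemma down_append_letter:
  assumes "a < c" "c < b"
  shows "down a b @ [c] \<approx> (c - 1) # down a b"
proof -
  obtain d where d: "c = Suc d" using assms by (cases c) auto
  have split: "down a b = down (Suc c) b @ [c, d] @ down a d"
  proof -
    have "down a b = down (Suc c) b @ down d (Suc c) @ down a d"
      using assms d down_split[of a d b] down_split[of d "Suc c" b] by simp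
    moreover have "down d (Suc c) = [c, d]" using d by (simp add: down_Suc)
    ultimately show ?thesis by simp
  qed
  have "down a b @ [c] = (down (Suc c) b @ [c, d]) @ (down a d @ [c]) @ []"
    using split by simp
  also have "\<dots> \<approx> (down (Suc c) b @ [c, d]) @ (c # down a d) @ []"
    by (intro hecke_equiv_append hecke_equiv_commute_letter) (auto simp: far_def d)
  also have "\<dots> = down (Suc c) b @ [c, d, c] @ down a d" by simp
  also have "\<dots> \<approx> down (Suc c) b @ [d, c, d] @ down a d"
    using hecke_equiv_sym[OF hecke_equiv_braid[of d]] d by (intro hecke_equiv_append) simp
  also have "\<dots> = [] @ (down (Suc c) b @ [d]) @ ([c, d] @ down a d)" by simp
  also have "\<dots> \<approx> [] @ (d # down (Suc c) b) @ ([c, d] @ down a d)"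
    by (intro hecke_equiv_append hecke_equiv_commute_letter) (auto simp: far_def d)
  also have "\<dots> = (c - 1) # down a b" using split d by simp
  finally show ?thesis .
qed

lemma down_append:
  "\<forall>c\<in>set L. a < c \<and> c < b \<Longrightarrow> down a b @ L \<approx> map (\<lambda>x. x - 1) L @ down a b"
proof (induction L)
  case (Cons c L)
  have "down a b @ c # L = [] @ (down a b @ [c]) @ L" by simp
  also have "\<dots> \<approx> [] @ ((c - 1) # down a b) @ L"
    using Cons by (intro hecke_equiv_append down_append_letter) auto
  also have "\<dots> = [c - 1] @ (down a b @ L) @ []" by simp
  also have "\<dots> \<approx> [c - 1] @ (map (\<lambda>x. x - 1) L @ down a b) @ []"
    using Cons by (intro hecke_equiv_append) auto
  finally show ?case by simp
qed simp

section \<open>Reading words of pipe dreams\<close>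

definition row :: "(nat \<times> nat) set \<Rightarrow> nat \<Rightarrow> nat set" where
  "row D r = {c. (r, c) \<in> D}"

definition row_word :: "nat \<Rightarrow> nat set \<Rightarrow> nat list" where
  "row_word r X = map (\<lambda>c. r + c - 1) (rev (sorted_list_of_set X))"

lemma finite_row: "finite D \<Longrightarrow> finite (row D r)"
  by (rule finite_subset[of _ "snd ` D"]) (force simp: row_def)+

lemma set_row_word: "finite X \<Longrightarrow> set (row_word r X) = (\<lambda>c. r + c - 1) ` X"
  by (simp add: row_word_def)

lemma row_word_union:
  assumes "finite A" "finite B" "\<forall>x\<in>A. \<forall>y\<in>B. y < x"
  shows "row_word r (A \<union> B) = row_word r A @ row_word r B"
proof -
  have "sorted_list_of_set (A \<union> B) = sorted_list_of_set B @ sorted_list_of_set A"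
  proof (rule sorted_distinct_set_unique)
    show "sorted (sorted_list_of_set B @ sorted_list_of_set A)"
      unfolding sorted_append using assms by (simp add: less_imp_le)
    show "distinct (sorted_list_of_set B @ sorted_list_of_set A)"
      unfolding distinct_append using assms by (simp add: disjoint_iff) (meson less_asym')
    show "set (sorted_list_of_set (A \<union> B)) = set (sorted_list_of_set B @ sorted_list_of_set A)"
      using assms by (simp add: Un_commute)
  qed simp_all
  then show ?thesis by (simp add: row_word_def)
qed

lemma row_word_split_at:
  assumes "finite K" "p \<notin> K"
  shows "row_word r K = row_word r {c\<in>K. p < c} @ row_word r {c\<in>K. c < p}"
proof -
  have "K = {c\<in>K. p < c} \<union> {c\<in>K. c < p}" using assms(2) by (auto, metis linorder_neqE_nat)
  then show ?thesis using assms(1) by (metis (no_types, lifting) row_word_union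
    finite_Un mem_Collect_eq less_trans)
qed

lemma row_word_interval:
  assumes "1 \<le> a"
  shows "row_word r {a..<b} = down (r + a - 1) (r + b - 1)"
proof -
  have "map (\<lambda>c. r + c - 1) [a..<b] = [r + a - 1..<r + b - 1]"
  proof (induction b)
    case (Suc b)
    show ?case
    proof (cases "a \<le> b")
      case True
      have "r + Suc b - 1 = Suc (r + b - 1)" using True assms by simp
      then have "[r + a - 1..<r + Suc b - 1] = [r + a - 1..<r + b - 1] @ [r + b - 1]"
        using True by (simp only: upt_Suc_append)
      then show ?thesis using Suc True by simp
    qed simp
  qed simp
  then show ?thesis by (simp add: row_word_def down_def flip: rev_map)
qed

lemma map_pred_row_word: "map (\<lambda>x. x - 1) (row_word (Suc r) X) = row_word r X"
  by (simp add: row_word_def)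

lemma down_append_row_word:
  assumes "finite X" "\<forall>c\<in>X. a < i + c \<and> i + c < b"
  shows "down a b @ row_word (Suc i) X \<approx> row_word i X @ down a b"
proof -
  have "down a b @ row_word (Suc i) X \<approx> map (\<lambda>x. x - 1) (row_word (Suc i) X) @ down a b"
    by (rule down_append) (use assms in \<open>force simp: set_row_word\<close>)
  then show ?thesis by (simp only: map_pred_row_word)
qed

lemma row_word_letters_ge:
  assumes "pipe_dream D" "a \<in> set (row_word r (row D r))"
  shows "r \<le> a"
proof -
  have "finite (row D r)" using assms(1) by (simp add: pipe_dream_def finite_row)
  then obtain c where "(r, c) \<in> D" "a = r + c - 1"
    using assms(2) by (auto simp: set_row_word row_def)
  moreover have "0 < c" using assms(1) calculation(1) by (auto simp: pipe_dream_def)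
  ultimately show ?thesis by simp
qed

lemma reading_word_eq_concat:
  assumes "pipe_dream D" "\<forall>(r, c)\<in>D. r < N" "0 < N"
  shows "reading_word D = concat (map (\<lambda>r. row_word r (row D r)) [1..<N])"
proof -
  let ?M = "Max (insert 0 (fst ` D))"
  have fin: "finite D" using assms(1) by (simp add: pipe_dream_def)
  then have "?M < N" using assms(2,3) by (auto simp: Max_less_iff)
  then have split: "[1..<N] = [1..<Suc ?M] @ [Suc ?M..<N]"
    using upt_add_eq_append[of 1 "Suc ?M" "N - Suc ?M"] by simp
  have le_M: "r \<le> ?M" if "(r, c) \<in> D" for r c
    using fin that by (intro Max_ge) force+
  have "row D r = {}" if "Suc ?M \<le> r" for r
    using that le_M by (fastforce simp: row_def)
  then have "concat (map (\<lambda>r. row_word r (row D r)) [Suc ?M..<N]) = []"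
    by (simp add: row_word_def)
  then show ?thesis unfolding split reading_word_def row_word_def row_def by simp
qed

lemma demazure_eq_foldl_hecke:
  assumes "pipe_dream D" "\<forall>(r, c)\<in>D. r < N" "0 < N"
  shows "demazure D = foldl hecke id (concat (map (\<lambda>r. row_word r (row D r)) [1..<N]))"
proof -
  have "id \<in> Sinf" unfolding Sinf_def by (auto intro!: exI[of _ "[]"] simp: wordprod_Nil)
  moreover have "\<forall>a\<in>set (concat (map (\<lambda>r. row_word r (row D r)) [1..<N])). 1 \<le> a"
    using row_word_letters_ge[OF assms(1)] by fastforce
  ultimately show ?thesis
    using reading_word_eq_concat[OF assms] by (simp add: demazure_def foldl_dstar_eq_foldl_hecke)
qed

definition rows_word :: "(nat \<times> nat) set \<Rightarrow> nat \<Rightarrow> nat list" where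
  "rows_word D i = row_word i (row D i) @ row_word (Suc i) (row D (Suc i))"

lemma demazure_split_rows:
  assumes "pipe_dream E" "\<forall>(r, c)\<in>E. r < N" "1 \<le> i" "Suc (Suc i) \<le> N"
  shows "demazure E = foldl hecke id (concat (map (\<lambda>r. row_word r (row E r)) [1..<i])
    @ rows_word E i @ concat (map (\<lambda>r. row_word r (row E r)) [Suc (Suc i)..<N]))"
proof -
  have "[1..<N] = [1..<i] @ [i..<N]" using assms(3,4) upt_add_eq_append[of 1 i "N - i"] by simp
  also have "[i..<N] = i # Suc i # [Suc (Suc i)..<N]" using assms(4) by (simp add: upt_conv_Cons)
  finally show ?thesis
    using demazure_eq_foldl_hecke[OF assms(1,2)] assms(4) by (simp add: rows_word_def)
qed

text \<open>The hypothesis on \<open>bs\<close> makes it commute with the words of the rows below \<open>Suc i\<close>,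
  whose letters are at least \<open>i + 2\<close>.\<close>
lemma demazure_eq_foldl_hecke_if_rows_equiv:
  assumes "pipe_dream E" "pipe_dream E'" "1 \<le> i"
    and "\<And>r. r \<noteq> i \<Longrightarrow> r \<noteq> Suc i \<Longrightarrow> row E r = row E' r"
    and "rows_word E i \<approx> rows_word E' i @ bs" "\<forall>b\<in>set bs. b \<le> i"
  shows "demazure E = foldl hecke (demazure E') bs"
proof -
  define N where "N = Max (insert 0 (fst ` (E \<union> E'))) + i + 3"
  have "finite (E \<union> E')" using assms(1,2) by (simp add: pipe_dream_def)
  then have "r \<le> Max (insert 0 (fst ` (E \<union> E')))" if "(r, c) \<in> E \<union> E'" for r c
    using that by (intro Max_ge) force+
  then have N: "\<forall>(r, c)\<in>E. r < N" "\<forall>(r, c)\<in>E'. r < N" "Suc (Suc i) \<le> N"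
    by (fastforce simp: N_def)+
  define pre where "pre = concat (map (\<lambda>r. row_word r (row E r)) [1..<i])"
  define suf where "suf = concat (map (\<lambda>r. row_word r (row E r)) [Suc (Suc i)..<N])"
  have "concat (map (\<lambda>r. row_word r (row E' r)) [1..<i]) = pre"
    "concat (map (\<lambda>r. row_word r (row E' r)) [Suc (Suc i)..<N]) = suf"
    unfolding pre_def suf_def using assms(4) by (auto intro!: arg_cong[where f = concat])
  then have E': "demazure E' = foldl hecke id (pre @ rows_word E' i @ suf)"
    using demazure_split_rows[OF assms(2) N(2) assms(3) N(3)] by simp
  have "\<forall>x\<in>set suf. \<forall>b\<in>set bs. far x b"
    using row_word_letters_ge[OF assms(1)] assms(6) by (fastforce simp: suf_def far_def)
  then have "suf @ bs \<approx> bs @ suf" by (rule hecke_equiv_commute)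
  then have "pre @ rows_word E' i @ bs @ suf \<approx> pre @ rows_word E' i @ suf @ bs"
    using hecke_equiv_append[where as = "pre @ rows_word E' i" and bs = "[]"] hecke_equiv_sym
    by simp
  moreover have "demazure E = foldl hecke id (pre @ rows_word E i @ suf)"
    using demazure_split_rows[OF assms(1) N(1) assms(3) N(3)] unfolding pre_def suf_def .
  ultimately show ?thesis using E' assms(5) by (simp add: hecke_equiv_def)
qed

section \<open>Mitosis\<close>

lemma start_spec:
  assumes "finite D"
  shows "1 \<le> start i D" "(i, start i D) \<notin> D" "\<And>c. 1 \<le> c \<Longrightarrow> c < start i D \<Longrightarrow> (i, c) \<in> D"
proof -
  let ?c = "Suc (Max (insert 0 (snd ` D)))"
  have "(i, ?c) \<notin> D"
  proof
    assume "(i, ?c) \<in> D"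
    then have "?c \<le> Max (insert 0 (snd ` D))" using assms by (intro Max_ge) force+
    then show False by simp
  qed
  then have "1 \<le> ?c \<and> (i, ?c) \<notin> D" by simp
  then show "1 \<le> start i D" "(i, start i D) \<notin> D"
    unfolding start_def by (metis (mono_tags, lifting) LeastI)+
  show "\<And>c. 1 \<le> c \<Longrightarrow> c < start i D \<Longrightarrow> (i, c) \<in> D"
    unfolding start_def using not_less_Least by blast
qed

lemma mem_Dp:
  "(r, c) \<in> Dp i D p \<longleftrightarrow>
    (r, c) \<in> D \<and> \<not> (r = i \<and> (c = p \<or> c \<in> Jset i D \<and> c < p))
    \<or> r = Suc i \<and> c \<in> Jset i D \<and> c < p"
  unfolding Dp_def by blast

lemma pipe_dream_Dp: "pipe_dream D \<Longrightarrow> pipe_dream (Dp i D p)"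
proof -
  assume pd: "pipe_dream D"
  have "Dp i D p \<subseteq> D \<union> {Suc i} \<times> {..<p}" by (auto simp: mem_Dp)
  then have "finite (Dp i D p)" using pd by (auto simp: pipe_dream_def intro: finite_subset)
  moreover have "\<forall>(r, c)\<in>Dp i D p. 0 < r \<and> 0 < c"
    using pd by (auto simp: mem_Dp pipe_dream_def Jset_def)
  ultimately show ?thesis by (simp add: pipe_dream_def)
qed

lemma row_Dp_other: "r \<noteq> i \<Longrightarrow> r \<noteq> Suc i \<Longrightarrow> row (Dp i D p) r = row D r"
  by (auto simp: row_def mem_Dp)

lemma Jset_eq:
  "Jset i D = {1..start i D - 1} - {c\<in>row D (Suc i). c < start i D}"
  by (auto simp: Jset_def row_def)

lemma row_eq_start:
  assumes "pipe_dream D"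
  shows "row D i = {c\<in>row D i. start i D < c} \<union> {1..<start i D}"
proof -
  have "finite D" and pos: "\<forall>c. (i, c) \<in> D \<longrightarrow> 1 \<le> c"
    using assms by (auto simp: pipe_dream_def)
  note start = start_spec[OF \<open>finite D\<close>, where i = i]
  have "\<forall>c. (i, c) \<in> D \<longrightarrow> c \<noteq> start i D" using start(2) by auto
  then show ?thesis using start(3) pos by (auto simp: row_def)
qed

lemma row_Dp_upper:
  assumes "pipe_dream D" "p \<in> Jset i D"
  shows "row (Dp i D p) i
    = {c\<in>row D i. start i D < c} \<union> ({Suc p..<start i D} \<union> {c\<in>row D (Suc i). c < p})"
proof -
  have "finite D" and pos: "\<forall>c. (i, c) \<in> D \<longrightarrow> 1 \<le> c" "\<forall>c. (Suc i, c) \<in> D \<longrightarrow> 1 \<le> c"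
    using assms(1) by (auto simp: pipe_dream_def)
  note start = start_spec[OF \<open>finite D\<close>, where i = i]
  have "\<forall>c. (i, c) \<in> D \<longrightarrow> c \<noteq> start i D" using start(2) by auto
  moreover have "1 \<le> p" "p < start i D" using assms(2) by (auto simp: Jset_def)
  ultimately show ?thesis using start(3) pos by (auto simp: row_def mem_Dp Jset_def)
qed

lemma row_Dp_lower:
  assumes "pipe_dream D" "p \<in> Jset i D"
  shows "row (Dp i D p) (Suc i) = {c\<in>row D (Suc i). p < c} \<union> {1..<p}"
proof -
  have pos: "\<forall>c. (Suc i, c) \<in> D \<longrightarrow> 1 \<le> c"
    using assms(1) by (auto simp: pipe_dream_def)
  have "1 \<le> p" "p < start i D" "\<forall>c. (Suc i, c) \<in> D \<longrightarrow> c \<noteq> p"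
    using assms(2) by (auto simp: Jset_def)
  then show ?thesis using pos by (auto simp: row_def mem_Dp Jset_def)
qed

lemma pipe_dream_mitosis: "pipe_dream D \<Longrightarrow> E \<in> mitosis i D \<Longrightarrow> pipe_dream E"
  by (auto simp: mitosis_def pipe_dream_Dp)

text \<open>The word of rows \<open>i\<close> and \<open>i + 1\<close> of \<open>D\<^sub>p\<close> without the crosses they share with \<open>D\<close>
  (right of \<open>start i D\<close> in row \<open>i\<close>, at columns \<open>\<ge> start i D\<close> in row \<open>i + 1\<close>), where
  \<open>k = start i D - 1\<close> and \<open>K\<close> is the set of columns \<open>\<le> k\<close> occupied in row \<open>i + 1\<close>.\<close>
definition mitosis_word :: "nat \<Rightarrow> nat \<Rightarrow> nat set \<Rightarrow> nat \<Rightarrow> nat list" where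
  "mitosis_word i k K p =
     down (i + p) (i + k) @ row_word i {c\<in>K. c < p} @ row_word (Suc i) {c\<in>K. p < c}
     @ down (Suc i) (i + p)"

lemma down_row_word_equiv_mitosis_word:
  assumes "finite K" "K \<subseteq> {1..k}" "1 \<le> p" "p \<le> k" "p \<notin> K"
  shows "down i (i + k) @ row_word (Suc i) K \<approx> mitosis_word i k K p @ [i]"
proof -
  let ?L = "{c\<in>K. c < p}" and ?G = "{c\<in>K. p < c}"
  have fin: "finite ?L" "finite ?G" using assms(1) by simp_all
  have pos: "\<forall>c\<in>K. 1 \<le> c" using assms(2) by auto
  have "down i (i + k) @ row_word (Suc i) K
      = down (i + p) (i + k) @ down i (i + p) @ row_word (Suc i) ?G @ row_word (Suc i) ?L"
    using assms by (simp add: down_split[of i "i + p" "i + k"] row_word_split_at)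
  also have "\<dots> \<approx> down (i + p) (i + k) @ row_word (Suc i) ?G @ down i (i + p) @ row_word (Suc i) ?L"
    by (rule hecke_equiv_commute_within) (use fin in \<open>force simp: far_def set_row_word\<close>)
  also have "\<dots> = (down (i + p) (i + k) @ row_word (Suc i) ?G) @ (down i (i + p) @ row_word (Suc i) ?L) @ []"
    by simp
  also have "\<dots> \<approx> (down (i + p) (i + k) @ row_word (Suc i) ?G) @ (row_word i ?L @ down i (i + p)) @ []"
    using fin pos by (intro hecke_equiv_append down_append_row_word) auto
  also have "\<dots> = down (i + p) (i + k) @ row_word (Suc i) ?G @ row_word i ?L @ down i (i + p)"
    by simp
  also have "\<dots> \<approx> down (i + p) (i + k) @ row_word i ?L @ row_word (Suc i) ?G @ down i (i + p)"
    by (rule hecke_equiv_commute_within) (use fin pos in \<open>force simp: far_def set_row_word\<close>)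
  also have "\<dots> = mitosis_word i k K p @ [i]"
    using assms down_split[of i "Suc i" "i + p"] by (simp add: mitosis_word_def down_Suc)
  finally show ?thesis .
qed

lemma mitosis_word_equiv_less:
  assumes "finite K" "K \<subseteq> {1..k}" "1 \<le> p" "p < q" "q \<le> k" "p \<notin> K" "q \<notin> K"
  shows "mitosis_word i k K p \<approx> mitosis_word i k K q"
proof -
  let ?A = "{c\<in>K. c < p}" and ?M = "{c\<in>K. p < c \<and> c < q}" and ?C = "{c\<in>K. q < c}"
  let ?pre = "down (i + q) (i + k)" and ?B = "down (i + p) (i + q)"
    and ?post = "down (Suc i) (i + p)"
  have fin: "finite ?A" "finite ?M" "finite ?C" using assms(1) by simp_all
  have pos: "\<forall>c\<in>K. 1 \<le> c" using assms(2) by auto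
  have "{c\<in>K. p < c} = ?C \<union> ?M" using assms by (auto, metis linorder_neqE_nat)
  then have G: "row_word (Suc i) {c\<in>K. p < c} = row_word (Suc i) ?C @ row_word (Suc i) ?M"
    by (simp add: row_word_union fin)
  have "{c\<in>K. c < q} = ?M \<union> ?A" using assms by (auto, metis linorder_neqE_nat)
  then have L: "row_word i {c\<in>K. c < q} = row_word i ?M @ row_word i ?A"
    by (simp add: row_word_union fin)
  have "mitosis_word i k K p
      \<approx> ?pre @ ?B @ row_word i ?A @ (row_word (Suc i) ?C @ row_word (Suc i) ?M @ ?post)"
    using assms by (simp add: mitosis_word_def G down_split[of "i + p" "i + q" "i + k"])
  also have "\<dots> \<approx> ?pre @ row_word i ?A @ ?B @ (row_word (Suc i) ?C @ row_word (Suc i) ?M @ ?post)"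
    by (rule hecke_equiv_commute_within) (use fin pos in \<open>force simp: far_def set_row_word\<close>)
  also have "\<dots> \<approx> (?pre @ row_word i ?A @ ?B) @ row_word (Suc i) ?C @ row_word (Suc i) ?M @ ?post"
    by simp
  also have "\<dots> \<approx> (?pre @ row_word i ?A @ ?B) @ row_word (Suc i) ?M @ row_word (Suc i) ?C @ ?post"
    by (rule hecke_equiv_commute_within) (use fin in \<open>force simp: far_def set_row_word\<close>)
  also have "\<dots> \<approx> (?pre @ row_word i ?A) @ (?B @ row_word (Suc i) ?M) @ (row_word (Suc i) ?C @ ?post)"
    by simp
  also have "\<dots> \<approx> (?pre @ row_word i ?A) @ (row_word i ?M @ ?B) @ (row_word (Suc i) ?C @ ?post)"
    using fin by (intro hecke_equiv_append down_append_row_word) auto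
  also have "\<dots> \<approx> (?pre @ row_word i ?A @ row_word i ?M) @ ?B @ row_word (Suc i) ?C @ ?post"
    by simp
  also have "\<dots> \<approx> (?pre @ row_word i ?A @ row_word i ?M) @ row_word (Suc i) ?C @ ?B @ ?post"
    by (rule hecke_equiv_commute_within) (use fin in \<open>force simp: far_def set_row_word\<close>)
  also have "\<dots> \<approx> ?pre @ row_word i ?A @ row_word i ?M @ (row_word (Suc i) ?C @ ?B @ ?post)"
    by simp
  also have "\<dots> \<approx> ?pre @ row_word i ?M @ row_word i ?A @ (row_word (Suc i) ?C @ ?B @ ?post)"
    by (rule hecke_equiv_commute_within) (use fin pos in \<open>force simp: far_def set_row_word\<close>)
  also have "\<dots> \<approx> mitosis_word i k K q"
    using assms by (simp add: mitosis_word_def L down_split[of "Suc i" "i + p" "i + q"])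
  finally show ?thesis .
qed

lemma mitosis_word_equiv:
  assumes "finite K" "K \<subseteq> {1..k}" "p \<in> {1..k} - K" "q \<in> {1..k} - K"
  shows "mitosis_word i k K p \<approx> mitosis_word i k K q"
proof (cases p q rule: linorder_cases)
  case less
  then show ?thesis using assms by (intro mitosis_word_equiv_less) auto
next
  case greater
  then have "mitosis_word i k K q \<approx> mitosis_word i k K p"
    using assms by (intro mitosis_word_equiv_less) auto
  then show ?thesis by (rule hecke_equiv_sym)
qed simp

lemma rows_word_equiv_mitosis_word:
  assumes "finite A" "finite H" "finite K" "\<forall>c\<in>A. Suc k < c" "\<forall>c\<in>H. k < c" "K \<subseteq> {1..k}"
    and "1 \<le> p" "p \<le> k" "p \<notin> K"
  shows "row_word i (A \<union> {1..<Suc k}) @ row_word (Suc i) (H \<union> K)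
    \<approx> row_word i A @ row_word (Suc i) H @ mitosis_word i k K p @ [i]"
proof -
  have "row_word i (A \<union> {1..<Suc k}) = row_word i A @ row_word i {1..<Suc k}"
    by (rule row_word_union) (use assms in auto)
  moreover have "row_word (Suc i) (H \<union> K) = row_word (Suc i) H @ row_word (Suc i) K"
    by (rule row_word_union) (use assms in force)+
  ultimately have "row_word i (A \<union> {1..<Suc k}) @ row_word (Suc i) (H \<union> K)
      \<approx> row_word i A @ down i (i + k) @ row_word (Suc i) H @ row_word (Suc i) K"
    by (simp add: row_word_interval)
  also have "\<dots> \<approx> row_word i A @ row_word (Suc i) H @ down i (i + k) @ row_word (Suc i) K"
    by (rule hecke_equiv_commute_within) (use assms in \<open>force simp: far_def set_row_word\<close>)
  also have "\<dots> \<approx> row_word i A @ row_word (Suc i) H @ mitosis_word i k K p @ [i]"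
    using hecke_equiv_append[OF down_row_word_equiv_mitosis_word[OF assms(3,6-9), of i],
        where as = "row_word i A @ row_word (Suc i) H" and bs = "[]"]
    by simp
  finally show ?thesis .
qed

lemma mitosis_rows_word_equiv_mitosis_word:
  assumes "finite A" "finite H" "finite K" "\<forall>c\<in>A. Suc k < c" "\<forall>c\<in>H. k < c" "K \<subseteq> {1..k}"
    and "1 \<le> p" "p \<le> k" "p \<notin> K"
  shows "row_word i (A \<union> ({Suc p..<Suc k} \<union> {c\<in>K. c < p}))
      @ row_word (Suc i) ((H \<union> {c\<in>K. p < c}) \<union> {1..<p})
    \<approx> row_word i A @ row_word (Suc i) H @ mitosis_word i k K p"
proof -
  let ?L = "{c\<in>K. c < p}" and ?G = "{c\<in>K. p < c}"
  have fin: "finite ?L" "finite ?G" using assms(3) by simp_all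
  have "row_word i (A \<union> ({Suc p..<Suc k} \<union> ?L)) = row_word i A @ row_word i ({Suc p..<Suc k} \<union> ?L)"
    by (rule row_word_union) (use assms fin in force)+
  moreover have "row_word i ({Suc p..<Suc k} \<union> ?L) = row_word i {Suc p..<Suc k} @ row_word i ?L"
    by (rule row_word_union) (use fin in auto)
  moreover have "row_word (Suc i) ((H \<union> ?G) \<union> {1..<p}) = row_word (Suc i) (H \<union> ?G) @ row_word (Suc i) {1..<p}"
    by (rule row_word_union) (use assms fin in force)+
  moreover have "row_word (Suc i) (H \<union> ?G) = row_word (Suc i) H @ row_word (Suc i) ?G"
    by (rule row_word_union) (use assms fin in force)+
  moreover have "row_word i A @ (down (i + p) (i + k) @ row_word i ?L) @ row_word (Suc i) H
      @ row_word (Suc i) ?G @ down (Suc i) (i + p)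
    \<approx> row_word i A @ row_word (Suc i) H @ (down (i + p) (i + k) @ row_word i ?L)
      @ row_word (Suc i) ?G @ down (Suc i) (i + p)"
    by (rule hecke_equiv_commute_within) (use assms fin in \<open>force simp: far_def set_row_word\<close>)
  ultimately show ?thesis by (simp add: mitosis_word_def row_word_interval)
qed

lemma mitosis_rows_words:
  assumes "pipe_dream D"
  obtains K k X where "finite K" "K \<subseteq> {1..k}" "Jset i D = {1..k} - K"
    and "\<And>p. p \<in> Jset i D \<Longrightarrow> rows_word D i \<approx> X @ mitosis_word i k K p @ [i]"
    and "\<And>p. p \<in> Jset i D \<Longrightarrow> rows_word (Dp i D p) i \<approx> X @ mitosis_word i k K p"
proof -
  define k where "k = start i D - 1"
  define A where "A = {c\<in>row D i. start i D < c}"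
  define H where "H = {c\<in>row D (Suc i). start i D \<le> c}"
  define K where "K = {c\<in>row D (Suc i). c < start i D}"
  have "finite D" using assms by (simp add: pipe_dream_def)
  then have s: "start i D = Suc k" using start_spec(1)[of D i] by (simp add: k_def)
  have pos: "\<forall>c\<in>row D (Suc i). 1 \<le> c" using assms by (auto simp: pipe_dream_def row_def)
  have props: "finite A" "finite H" "finite K" "\<forall>c\<in>A. Suc k < c" "\<forall>c\<in>H. k < c" "K \<subseteq> {1..k}"
    using finite_row[OF \<open>finite D\<close>] pos s by (auto simp: A_def H_def K_def)
  have J: "Jset i D = {1..k} - K" using s by (auto simp: Jset_eq K_def)
  have rows: "row D i = A \<union> {1..<Suc k}" "row D (Suc i) = H \<union> K"
    using row_eq_start[OF assms, of i] s by (auto simp: A_def H_def K_def)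
  let ?X = "row_word i A @ row_word (Suc i) H"
  have D_word: "rows_word D i \<approx> ?X @ mitosis_word i k K p @ [i]" if "p \<in> Jset i D" for p
    using rows_word_equiv_mitosis_word[OF props, of p i] that J by (simp add: rows_word_def rows)
  have Dp_word: "rows_word (Dp i D p) i \<approx> ?X @ mitosis_word i k K p" if p: "p \<in> Jset i D" for p
  proof -
    have "row (Dp i D p) i = A \<union> ({Suc p..<Suc k} \<union> {c\<in>K. c < p})"
      using row_Dp_upper[OF assms p] s J p by (auto simp: A_def K_def)
    moreover have "row (Dp i D p) (Suc i) = (H \<union> {c\<in>K. p < c}) \<union> {1..<p}"
      using row_Dp_lower[OF assms p] s J p by (auto simp: H_def K_def)
    ultimately show ?thesis
      using mitosis_rows_word_equiv_mitosis_word[OF props, of p i] p J by (simp add: rows_word_def)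
  qed
  show thesis using that[OF props(3,6) J D_word Dp_word] .
qed

lemma demazure_mitosis_eq:
  assumes "pipe_dream D" "1 \<le> i" "E \<in> mitosis i D" "E' \<in> mitosis i D"
  shows "demazure E = demazure E'"
proof -
  obtain K k X where K: "finite K" "K \<subseteq> {1..k}" and J: "Jset i D = {1..k} - K"
    and "\<And>p. p \<in> Jset i D \<Longrightarrow> rows_word D i \<approx> X @ mitosis_word i k K p @ [i]"
    and Dp_word: "\<And>p. p \<in> Jset i D \<Longrightarrow> rows_word (Dp i D p) i \<approx> X @ mitosis_word i k K p"
    by (rule mitosis_rows_words[OF assms(1), where i = i]) (rule that)
  obtain p q where p: "p \<in> Jset i D" "E = Dp i D p" and q: "q \<in> Jset i D" "E' = Dp i D q"
    using assms(3,4) by (auto simp: mitosis_def)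
  have "mitosis_word i k K p \<approx> mitosis_word i k K q"
    using mitosis_word_equiv[OF K] p q J by simp
  then have "rows_word E i \<approx> rows_word E' i @ []"
    using Dp_word[OF p(1)] Dp_word[OF q(1)] p q by (simp add: hecke_equiv_def)
  then show ?thesis
    using demazure_eq_foldl_hecke_if_rows_equiv[of E E' i "[]"] assms(1,2) p q
    by (simp add: pipe_dream_Dp row_Dp_other)
qed

lemma demazure_eq_hecke_mitosis:
  assumes "pipe_dream D" "1 \<le> i" "E \<in> mitosis i D"
  shows "demazure D = hecke (demazure E) i"
proof -
  obtain K k X where "finite K" "K \<subseteq> {1..k}" "Jset i D = {1..k} - K"
    and D_word: "\<And>p. p \<in> Jset i D \<Longrightarrow> rows_word D i \<approx> X @ mitosis_word i k K p @ [i]"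
    and Dp_word: "\<And>p. p \<in> Jset i D \<Longrightarrow> rows_word (Dp i D p) i \<approx> X @ mitosis_word i k K p"
    by (rule mitosis_rows_words[OF assms(1), where i = i]) (rule that)
  obtain p where p: "p \<in> Jset i D" "E = Dp i D p" using assms(3) by (auto simp: mitosis_def)
  have "rows_word D i \<approx> rows_word E i @ [i]"
    using D_word[OF p(1)] Dp_word[OF p(1)] p(2) by (simp add: hecke_equiv_def)
  then show ?thesis
    using demazure_eq_foldl_hecke_if_rows_equiv[of D E i "[i]"] assms(1,2) p
    by (simp add: pipe_dream_Dp row_Dp_other)
qed

theorem theorem2p3:
  fixes w :: "nat \<Rightarrow> nat" and i :: nat and D :: "(nat \<times> nat) set"
  assumes "w \<in> Sinf" and "1 \<le> i"
    and "int (len (w \<circ> s i)) = int (len w) - 1"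
    and "D \<in> PD w"
    and "mitosis i D \<noteq> {}"
  shows "mitosis i D \<subseteq> PD (w \<circ> s i) \<or> mitosis i D \<subseteq> PD w"
proof -
  have pd: "pipe_dream D" and w: "demazure D = w" using assms(4) by (auto simp: PD_def)
  obtain E0 where E0: "E0 \<in> mitosis i D" using assms(5) by blast
  let ?y = "demazure E0"
  have sub: "mitosis i D \<subseteq> PD ?y"
    using demazure_mitosis_eq[OF pd assms(2) _ E0] pipe_dream_mitosis[OF pd] by (auto simp: PD_def)
  have "w = hecke ?y i" using demazure_eq_hecke_mitosis[OF pd assms(2) E0] w by simp
  then consider "?y = w \<circ> s i" | "?y = w"
    unfolding hecke_def by (metis comp_assoc comp_id s_comp_s)
  then show ?thesis using sub by cases simp_all
qed

end
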